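(* Let $\beta\in[0,1]$ and let $f\in C^{3+\beta}$ with $f'>0$ on $[A,B]$. Then there is a constant $C$ depending only on $f$ (and $[A,B]$) such that for all $\theta,x_1,x_2,x_3\in[A,B]$, $$ \left|\frac{f''(\theta)}{2f'(\theta)}+\frac{f'''(\theta)}{6f'(\theta)}(x_1+x_2+x_3-3\theta)-\left(\frac{f''(\theta)}{2f'(\theta)}\right)^2(x_2+x_3-2\theta)-\frac{f''(x_1)}{2f'(x_1)}-\frac{1}{6}Sf(x_1)(x_2+x_3-2x_1)\right|\le C\Delta_\theta^{1+\beta}, $$ where $\Delta_\theta=\max\{x_1,x_2,x_3,\theta\}-\min\{x_1,x_2,x_3,\theta\}$.
   Context: The Schwarzian derivative is $Sf=\frac{f'''}{f'}-\frac{3}{2}\left(\frac{f''}{f'}\right)^2$. $C^{3+\beta}$ means three times differentiable with $\beta$-Hölder third derivative. *)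

theory Defs
  imports "HOL-Analysis.Analysis"
begin

definition C3_holder :: "real \<Rightarrow> real \<Rightarrow> real \<Rightarrow> (real \<Rightarrow> real) \<Rightarrow> (real \<Rightarrow> real)
    \<Rightarrow> (real \<Rightarrow> real) \<Rightarrow> (real \<Rightarrow> real) \<Rightarrow> bool" where
  "C3_holder \<beta> A B f f1 f2 f3 \<longleftrightarrow>
     (\<forall>x\<in>{A..B}. (f has_real_derivative f1 x) (at x within {A..B}) \<and>
                 (f1 has_real_derivative f2 x) (at x within {A..B}) \<and>
                 (f2 has_real_derivative f3 x) (at x within {A..B})) \<and>
     continuous_on {A..B} f3 \<and>
     (\<exists>H. \<forall>x\<in>{A..B}. \<forall>y\<in>{A..B}. \<bar>f3 x - f3 y\<bar> \<le> H * \<bar>x - y\<bar> powr \<beta>)"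

definition schwarzian :: "(real \<Rightarrow> real) \<Rightarrow> (real \<Rightarrow> real) \<Rightarrow> (real \<Rightarrow> real) \<Rightarrow> real \<Rightarrow> real" where
  "schwarzian f1 f2 f3 x = f3 x / f1 x - 3/2 * (f2 x / f1 x)^2"

end

theory Submission
  imports Defs
begin

text \<open>Put \<open>g = f''/(2f')\<close>, so that \<open>g' = f'''/(2f') - (f''/f')\<^sup>2/2\<close>. A direct computation
  shows that the quantity to be estimated equals
  \<open>-(g x\<^sub>1 - g \<theta> - g' \<theta> (x\<^sub>1 - \<theta>)) + (Sf \<theta> - Sf x\<^sub>1)/6 \<cdot> (x\<^sub>2 + x\<^sub>3 - 2x\<^sub>1)\<close>.
  Since \<open>f'\<close> is bounded away from zero, \<open>g'\<close> and \<open>Sf\<close> are built from \<open>f', f'', f'''\<close> by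
  operations preserving \<open>\<beta>\<close>-H\<ouml>lder continuity, so the Taylor remainder of \<open>g\<close> is
  \<open>O(|x\<^sub>1 - \<theta>|\<^bsup>1+\<beta>\<^esup>)\<close> and the second term is \<open>O(|x\<^sub>1 - \<theta>|\<^bsup>\<beta>\<^esup> \<Delta>\<^sub>\<theta>)\<close>.\<close>

definition holder_on :: "real \<Rightarrow> real set \<Rightarrow> (real \<Rightarrow> real) \<Rightarrow> bool" where
  "holder_on b S u \<longleftrightarrow> (\<exists>K\<ge>0. \<forall>x\<in>S. \<forall>y\<in>S. \<bar>u x - u y\<bar> \<le> K * \<bar>x - y\<bar> powr b)"

lemma holder_onI:
  assumes "0 \<le> K" "\<And>x y. x \<in> S \<Longrightarrow> y \<in> S \<Longrightarrow> \<bar>u x - u y\<bar> \<le> K * \<bar>x - y\<bar> powr b"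
  shows "holder_on b S u"
  using assms unfolding holder_on_def by blast

lemma holder_onE:
  assumes "holder_on b S u"
  obtains K where "0 \<le> K" "\<And>x y. x \<in> S \<Longrightarrow> y \<in> S \<Longrightarrow> \<bar>u x - u y\<bar> \<le> K * \<bar>x - y\<bar> powr b"
  using assms unfolding holder_on_def by blast

lemma holder_on_diff:
  assumes "holder_on b S u" "holder_on b S v"
  shows "holder_on b S (\<lambda>x. u x - v x)"
proof -
  obtain K L where K: "0 \<le> K" "\<And>x y. x \<in> S \<Longrightarrow> y \<in> S \<Longrightarrow> \<bar>u x - u y\<bar> \<le> K * \<bar>x - y\<bar> powr b"
    and L: "0 \<le> L" "\<And>x y. x \<in> S \<Longrightarrow> y \<in> S \<Longrightarrow> \<bar>v x - v y\<bar> \<le> L * \<bar>x - y\<bar> powr b"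
    using assms by (metis holder_onE)
  show ?thesis
  proof (rule holder_onI)
    fix x y assume "x \<in> S" "y \<in> S"
    then show "\<bar>u x - v x - (u y - v y)\<bar> \<le> (K + L) * \<bar>x - y\<bar> powr b"
      using K(2)[of x y] L(2)[of x y] by (simp add: algebra_simps abs_triangle_ineq4 abs_le_iff)
  qed (use K L in simp)
qed

lemma holder_on_cmult:
  assumes "holder_on b S u"
  shows "holder_on b S (\<lambda>x. c * u x)"
proof -
  obtain K where K: "0 \<le> K" "\<And>x y. x \<in> S \<Longrightarrow> y \<in> S \<Longrightarrow> \<bar>u x - u y\<bar> \<le> K * \<bar>x - y\<bar> powr b"
    using assms by (metis holder_onE)
  show ?thesis
  proof (rule holder_onI)
    fix x y assume "x \<in> S" "y \<in> S"
    then have "\<bar>c\<bar> * \<bar>u x - u y\<bar> \<le> \<bar>c\<bar> * (K * \<bar>x - y\<bar> powr b)"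
      using K(2) by (simp add: mult_left_mono)
    then show "\<bar>c * u x - c * u y\<bar> \<le> \<bar>c\<bar> * K * \<bar>x - y\<bar> powr b"
      by (simp add: abs_mult[symmetric] right_diff_distrib mult.assoc)
  qed (use K in simp)
qed

lemma holder_on_imp_bounded:
  assumes "holder_on b S u" "bounded S" "0 \<le> b"
  shows "bounded (u ` S)"
proof (cases "S = {}")
  case False
  then obtain x0 where x0: "x0 \<in> S" by blast
  obtain K where K: "0 \<le> K" "\<And>x y. x \<in> S \<Longrightarrow> y \<in> S \<Longrightarrow> \<bar>u x - u y\<bar> \<le> K * \<bar>x - y\<bar> powr b"
    using assms(1) by (metis holder_onE)
  have "\<bar>u x\<bar> \<le> \<bar>u x0\<bar> + K * diameter S powr b" if "x \<in> S" for x
  proof -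
    have "\<bar>x - x0\<bar> \<le> diameter S"
      using diameter_bounded_bound[OF assms(2) that x0] by (simp add: dist_real_def)
    then have "K * \<bar>x - x0\<bar> powr b \<le> K * diameter S powr b"
      using K(1) assms(3) by (intro mult_left_mono powr_mono2) auto
    then show ?thesis using K(2)[OF that x0] by linarith
  qed
  then show ?thesis unfolding bounded_iff by (intro exI[of _ "\<bar>u x0\<bar> + K * diameter S powr b"]) auto
qed simp

lemma holder_on_mult:
  assumes "holder_on b S u" "holder_on b S v" "bounded S" "0 \<le> b"
  shows "holder_on b S (\<lambda>x. u x * v x)"
proof -
  obtain K L where K: "0 \<le> K" "\<And>x y. x \<in> S \<Longrightarrow> y \<in> S \<Longrightarrow> \<bar>u x - u y\<bar> \<le> K * \<bar>x - y\<bar> powr b"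
    and L: "0 \<le> L" "\<And>x y. x \<in> S \<Longrightarrow> y \<in> S \<Longrightarrow> \<bar>v x - v y\<bar> \<le> L * \<bar>x - y\<bar> powr b"
    using assms(1,2) by (metis holder_onE)
  obtain M N where M: "\<And>x. x \<in> S \<Longrightarrow> \<bar>u x\<bar> \<le> M" and N: "\<And>x. x \<in> S \<Longrightarrow> \<bar>v x\<bar> \<le> N"
    using holder_on_imp_bounded[OF assms(1,3,4)] holder_on_imp_bounded[OF assms(2,3,4)]
    unfolding bounded_iff by (metis image_eqI real_norm_def)
  show ?thesis
  proof (rule holder_onI)
    fix x y assume xy: "x \<in> S" "y \<in> S"
    have "\<bar>u x\<bar> * \<bar>v x - v y\<bar> \<le> \<bar>M\<bar> * (L * \<bar>x - y\<bar> powr b)"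
      using M[OF xy(1)] L by (intro mult_mono) (auto simp: xy)
    moreover have "\<bar>v y\<bar> * \<bar>u x - u y\<bar> \<le> \<bar>N\<bar> * (K * \<bar>x - y\<bar> powr b)"
      using N[OF xy(2)] K by (intro mult_mono) (auto simp: xy)
    moreover have "u x * v x - u y * v y = u x * (v x - v y) + v y * (u x - u y)"
      by algebra
    then have "\<bar>u x * v x - u y * v y\<bar> \<le> \<bar>u x\<bar> * \<bar>v x - v y\<bar> + \<bar>v y\<bar> * \<bar>u x - u y\<bar>"
      by (metis abs_mult abs_triangle_ineq)
    ultimately show "\<bar>u x * v x - u y * v y\<bar> \<le> (\<bar>M\<bar> * L + \<bar>N\<bar> * K) * \<bar>x - y\<bar> powr b"
      by (simp add: algebra_simps)
  qed (use K L in simp)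
qed

lemma holder_on_inverse:
  assumes "holder_on b S u" "0 < m" "\<And>x. x \<in> S \<Longrightarrow> m \<le> u x"
  shows "holder_on b S (\<lambda>x. 1 / u x)"
proof -
  obtain K where K: "0 \<le> K" "\<And>x y. x \<in> S \<Longrightarrow> y \<in> S \<Longrightarrow> \<bar>u x - u y\<bar> \<le> K * \<bar>x - y\<bar> powr b"
    using assms(1) by (metis holder_onE)
  show ?thesis
  proof (rule holder_onI)
    fix x y assume xy: "x \<in> S" "y \<in> S"
    have u: "m \<le> u x" "m \<le> u y" using xy assms(3) by auto
    have "\<bar>1 / u x - 1 / u y\<bar> = \<bar>u x - u y\<bar> / (u x * u y)"
      using u assms(2) by (simp add: field_simps abs_minus_commute)
    also have "\<dots> \<le> \<bar>u x - u y\<bar> / (m * m)"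
      using u assms(2) by (intro divide_left_mono mult_mono) auto
    also have "\<dots> \<le> K * \<bar>x - y\<bar> powr b / (m * m)"
      using K(2)[OF xy] by (simp add: divide_right_mono)
    finally show "\<bar>1 / u x - 1 / u y\<bar> \<le> K / (m * m) * \<bar>x - y\<bar> powr b" by simp
  qed (use K in simp)
qed

lemma holder_on_divide:
  assumes "holder_on b S u" "holder_on b S v" "bounded S" "0 \<le> b"
    and "0 < m" "\<And>x. x \<in> S \<Longrightarrow> m \<le> v x"
  shows "holder_on b S (\<lambda>x. u x / v x)"
  using holder_on_mult[OF assms(1) holder_on_inverse[OF assms(2,5,6)] assms(3,4)] by simp

lemma lipschitz_on_imp_holder_on:
  assumes "L-lipschitz_on S u" "bounded S" "0 \<le> b" "b \<le> 1"
  shows "holder_on b S u"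
proof (rule holder_onI)
  fix x y assume xy: "x \<in> S" "y \<in> S"
  let ?d = "\<bar>x - y\<bar>"
  have d: "?d \<le> diameter S"
    using diameter_bounded_bound[OF assms(2) xy] by (simp add: dist_real_def)
  have "\<bar>u x - u y\<bar> \<le> L * ?d"
    using lipschitz_onD[OF assms(1) xy] by (simp add: dist_real_def)
  also have "?d = ?d powr (1 - b) * ?d powr b"
    by (cases "?d = 0") (simp_all add: powr_add[symmetric])
  also have "L * (?d powr (1 - b) * ?d powr b) \<le> L * (diameter S powr (1 - b) * ?d powr b)"
    using d assms(3,4) lipschitz_on_nonneg[OF assms(1)]
    by (intro mult_left_mono mult_right_mono powr_mono2) auto
  finally show "\<bar>u x - u y\<bar> \<le> L * diameter S powr (1 - b) * ?d powr b"
    by (simp add: mult.assoc)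
qed (use lipschitz_on_nonneg[OF assms(1)] in simp)

lemma continuous_derivative_imp_lipschitz_on:
  assumes "convex S" "compact S" "continuous_on S u'"
    and "\<And>x. x \<in> S \<Longrightarrow> (u has_real_derivative u' x) (at x within S)"
  obtains L where "L-lipschitz_on S u"
proof -
  obtain M where M: "\<And>x. x \<in> S \<Longrightarrow> \<bar>u' x\<bar> \<le> M"
    using compact_imp_bounded[OF compact_continuous_image[OF assms(3,2)]]
    unfolding bounded_iff by (metis image_eqI real_norm_def)
  have "\<bar>u x - u y\<bar> \<le> max M 0 * \<bar>x - y\<bar>" if "x \<in> S" "y \<in> S" for x y
    using field_differentiable_bound[OF assms(1) assms(4), of "max M 0"] M that by force
  then have "(max M 0)-lipschitz_on S u"
    by (intro lipschitz_onI) (auto simp: dist_real_def)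
  then show thesis by (rule that)
qed

lemma holder_derivative_taylor_remainder:
  assumes "convex S" "0 \<le> b" "0 \<le> K" "x \<in> S" "t \<in> S"
    and deriv: "\<And>z. z \<in> S \<Longrightarrow> (u has_real_derivative u' z) (at z within S)"
    and holder: "\<And>y z. y \<in> S \<Longrightarrow> z \<in> S \<Longrightarrow> \<bar>u' y - u' z\<bar> \<le> K * \<bar>y - z\<bar> powr b"
  shows "\<bar>u x - u t - u' t * (x - t)\<bar> \<le> K * \<bar>x - t\<bar> powr (1 + b)"
proof -
  define T where "T = closed_segment t x"
  have T: "T \<subseteq> S" "convex T" "x \<in> T" "t \<in> T"
    using assms(1,4,5) unfolding T_def by (auto simp: closed_segment_subset)
  have "\<bar>(u x - u' t * x) - (u t - u' t * t)\<bar> \<le> K * \<bar>x - t\<bar> powr b * \<bar>x - t\<bar>"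
  proof (rule field_differentiable_bound[OF T(2), of "\<lambda>z. u z - u' t * z" "\<lambda>z. u' z - u' t",
        simplified, OF _ _ T(3,4)])
    fix z assume z: "z \<in> T"
    show "((\<lambda>z. u z - u' t * z) has_real_derivative u' z - u' t) (at z within T)"
      using deriv[of z] z T(1) by (auto intro!: derivative_eq_intros intro: DERIV_subset)
    have "\<bar>z - t\<bar> \<le> \<bar>x - t\<bar>"
      using z unfolding T_def closed_segment_eq_real_ivl by (auto split: if_splits)
    then have "\<bar>z - t\<bar> powr b \<le> \<bar>x - t\<bar> powr b"
      using assms(2) by (intro powr_mono2) auto
    then show "\<bar>u' z - u' t\<bar> \<le> K * \<bar>x - t\<bar> powr b"
      using holder[of z t] z T(1) assms(3,5) by (meson mult_left_mono order_trans subsetD)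
  qed
  then show ?thesis
    by (simp add: powr_add algebra_simps)
qed

lemma C3_holder_imp_holder_on:
  assumes "C3_holder \<beta> A B f f1 f2 f3" "0 \<le> \<beta>" "\<beta> \<le> 1"
  shows "holder_on \<beta> {A..B} f1" "holder_on \<beta> {A..B} f2" "holder_on \<beta> {A..B} f3"
proof -
  have d1: "\<And>x. x \<in> {A..B} \<Longrightarrow> (f1 has_real_derivative f2 x) (at x within {A..B})"
    and d2: "\<And>x. x \<in> {A..B} \<Longrightarrow> (f2 has_real_derivative f3 x) (at x within {A..B})"
    and c3: "continuous_on {A..B} f3"
    and "\<exists>H. \<forall>x\<in>{A..B}. \<forall>y\<in>{A..B}. \<bar>f3 x - f3 y\<bar> \<le> H * \<bar>x - y\<bar> powr \<beta>"
    using assms(1) unfolding C3_holder_def by auto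
  then obtain H where H: "\<And>x y. x \<in> {A..B} \<Longrightarrow> y \<in> {A..B} \<Longrightarrow> \<bar>f3 x - f3 y\<bar> \<le> H * \<bar>x - y\<bar> powr \<beta>"
    by blast
  show "holder_on \<beta> {A..B} f3"
  proof (rule holder_onI[of "max H 0"])
    fix x y assume "x \<in> {A..B}" "y \<in> {A..B}"
    then show "\<bar>f3 x - f3 y\<bar> \<le> max H 0 * \<bar>x - y\<bar> powr \<beta>"
      using H by (meson max.cobounded1 mult_right_mono order_trans powr_ge_zero)
  qed simp
  obtain L2 where "L2-lipschitz_on {A..B} f2"
    using continuous_derivative_imp_lipschitz_on[OF _ _ c3 d2] by auto
  then show "holder_on \<beta> {A..B} f2"
    using assms(2,3) by (intro lipschitz_on_imp_holder_on) auto
  obtain L1 where "L1-lipschitz_on {A..B} f1"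
    using continuous_derivative_imp_lipschitz_on[OF _ _ DERIV_continuous_on[OF d2] d1] by auto
  then show "holder_on \<beta> {A..B} f1"
    using assms(2,3) by (intro lipschitz_on_imp_holder_on) auto
qed

lemma C3_holder_imp_holder_on_schwarzian:
  assumes "C3_holder \<beta> A B f f1 f2 f3" "0 \<le> \<beta>" "\<beta> \<le> 1" "\<forall>x\<in>{A..B}. f1 x > 0"
  shows "holder_on \<beta> {A..B} (\<lambda>x. f3 x / (2 * f1 x) - (f2 x / f1 x)\<^sup>2 / 2)"
    and "holder_on \<beta> {A..B} (schwarzian f1 f2 f3)"
proof -
  have "continuous_on {A..B} f1"
    using assms(1) unfolding C3_holder_def by (intro DERIV_continuous_on) auto
  obtain m where m: "0 < m" "\<And>x. x \<in> {A..B} \<Longrightarrow> m \<le> f1 x"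
  proof (cases "A \<le> B")
    case True
    then obtain x0 where "x0 \<in> {A..B}" "\<forall>y\<in>{A..B}. f1 x0 \<le> f1 y"
      using continuous_attains_inf[of "{A..B}" f1] \<open>continuous_on {A..B} f1\<close> by auto
    then show thesis using that[of "f1 x0"] assms(4) by auto
  qed (use that[of 1] in auto)
  define r where "r x = f2 x / f1 x" for x
  define p where "p x = f3 x / f1 x" for x
  have r: "holder_on \<beta> {A..B} r" and p: "holder_on \<beta> {A..B} p"
    unfolding r_def p_def using C3_holder_imp_holder_on[OF assms(1-3)] m assms(2)
    by (auto intro!: holder_on_divide)
  have "(\<lambda>x. f3 x / (2 * f1 x) - (f2 x / f1 x)\<^sup>2 / 2) = (\<lambda>x. 1/2 * p x - 1/2 * (r x * r x))"
    unfolding r_def p_def by (simp add: fun_eq_iff power2_eq_square)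
  then show "holder_on \<beta> {A..B} (\<lambda>x. f3 x / (2 * f1 x) - (f2 x / f1 x)\<^sup>2 / 2)"
    using assms(2) by (metis holder_on_diff holder_on_cmult holder_on_mult r p bounded_closed_interval)
  have "schwarzian f1 f2 f3 = (\<lambda>x. p x - 3/2 * (r x * r x))"
    unfolding r_def p_def schwarzian_def[abs_def] by (simp add: fun_eq_iff power2_eq_square)
  then show "holder_on \<beta> {A..B} (schwarzian f1 f2 f3)"
    using assms(2) by (metis holder_on_diff holder_on_cmult holder_on_mult r p bounded_closed_interval)
qed

lemma half_log_derivative_has_real_derivative:
  assumes "(f1 has_real_derivative f2 x) (at x within S)" "(f2 has_real_derivative f3 x) (at x within S)"
    and "f1 x \<noteq> 0"
  shows "((\<lambda>x. f2 x / (2 * f1 x)) has_real_derivative f3 x / (2 * f1 x) - (f2 x / f1 x)\<^sup>2 / 2)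
    (at x within S)"
  using assms by (auto intro!: derivative_eq_intros simp: field_simps power2_eq_square)

lemma schwarzian_expansion_identity:
  assumes "f1 t \<noteq> 0" "f1 x1 \<noteq> 0"
  shows "f2 t / (2 * f1 t) + f3 t / (6 * f1 t) * (x1 + x2 + x3 - 3 * t)
        - (f2 t / (2 * f1 t))\<^sup>2 * (x2 + x3 - 2 * t)
        - f2 x1 / (2 * f1 x1) - 1/6 * schwarzian f1 f2 f3 x1 * (x2 + x3 - 2 * x1)
      = - (f2 x1 / (2 * f1 x1) - f2 t / (2 * f1 t)
           - (f3 t / (2 * f1 t) - (f2 t / f1 t)\<^sup>2 / 2) * (x1 - t))
        + (schwarzian f1 f2 f3 t - schwarzian f1 f2 f3 x1) / 6 * (x2 + x3 - 2 * x1)"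
  unfolding schwarzian_def using assms by (simp add: field_simps power2_eq_square)

lemma two_term_bound_by_spread:
  fixes x1 x2 x3 t :: real
  defines "D \<equiv> Max {x1, x2, x3, t} - Min {x1, x2, x3, t}"
  assumes R: "\<bar>R\<bar> \<le> K * \<bar>x1 - t\<bar> powr (1 + b)"
    and s: "\<bar>s\<bar> \<le> L * \<bar>x1 - t\<bar> powr b"
    and "0 \<le> b" "0 \<le> K" "0 \<le> L"
  shows "\<bar>R + s * (x2 + x3 - 2 * x1)\<bar> \<le> (K + 2 * L) * D powr (1 + b)"
proof -
  have D: "D = max x1 (max x2 (max x3 t)) - min x1 (min x2 (min x3 t))"
    unfolding D_def by simp
  have "0 \<le> D" and dist: "\<bar>x1 - t\<bar> \<le> D" and spread: "\<bar>x2 + x3 - 2 * x1\<bar> \<le> 2 * D"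
    unfolding D by (auto simp: max_def min_def)
  have "K * \<bar>x1 - t\<bar> powr (1 + b) \<le> K * D powr (1 + b)"
    using dist assms(4,5) by (intro mult_left_mono powr_mono2) auto
  with R have R': "\<bar>R\<bar> \<le> K * D powr (1 + b)" by linarith
  have "L * \<bar>x1 - t\<bar> powr b \<le> L * D powr b"
    using dist assms(4,6) by (intro mult_left_mono powr_mono2) auto
  with s have "\<bar>s\<bar> \<le> L * D powr b" by linarith
  then have "\<bar>s * (x2 + x3 - 2 * x1)\<bar> \<le> L * D powr b * (2 * D)"
    unfolding abs_mult using spread assms(6) by (intro mult_mono) auto
  also have "\<dots> = 2 * L * D powr (1 + b)"
    using \<open>0 \<le> D\<close> by (simp add: powr_add)
  finally show ?thesis
    using R' abs_triangle_ineq[of R "s * (x2 + x3 - 2 * x1)"] by (simp add: distrib_right)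
qed

theorem lemma1:
  fixes \<beta> A B :: real and f f1 f2 f3 :: "real \<Rightarrow> real"
  assumes "0 \<le> \<beta>" "\<beta> \<le> 1"
    and "C3_holder \<beta> A B f f1 f2 f3"
    and "\<forall>x\<in>{A..B}. f1 x > 0"
  shows "\<exists>C. \<forall>\<theta>\<in>{A..B}. \<forall>x1\<in>{A..B}. \<forall>x2\<in>{A..B}. \<forall>x3\<in>{A..B}.
    \<bar>f2 \<theta> / (2 * f1 \<theta>) + f3 \<theta> / (6 * f1 \<theta>) * (x1 + x2 + x3 - 3 * \<theta>)
      - (f2 \<theta> / (2 * f1 \<theta>))^2 * (x2 + x3 - 2 * \<theta>)
      - f2 x1 / (2 * f1 x1) - 1/6 * schwarzian f1 f2 f3 x1 * (x2 + x3 - 2 * x1)\<bar>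
    \<le> C * (Max {x1, x2, x3, \<theta>} - Min {x1, x2, x3, \<theta>}) powr (1 + \<beta>)"
proof -
  let ?S = "{A..B}"
  define g where "g x = f2 x / (2 * f1 x)" for x
  define g' where "g' x = f3 x / (2 * f1 x) - (f2 x / f1 x)\<^sup>2 / 2" for x
  have g_deriv: "(g has_real_derivative g' x) (at x within ?S)" if "x \<in> ?S" for x
    unfolding g_def g'_def using assms(3,4) that
    by (intro half_log_derivative_has_real_derivative) (fastforce simp: C3_holder_def)+
  obtain KG where KG: "0 \<le> KG"
    "\<And>x y. x \<in> ?S \<Longrightarrow> y \<in> ?S \<Longrightarrow> \<bar>g' x - g' y\<bar> \<le> KG * \<bar>x - y\<bar> powr \<beta>"
    using C3_holder_imp_holder_on_schwarzian(1)[OF assms(3,1,2,4)] unfolding g'_def[abs_def]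
    by (rule holder_onE) blast
  obtain KS where KS: "0 \<le> KS" "\<And>x y. x \<in> ?S \<Longrightarrow> y \<in> ?S \<Longrightarrow>
      \<bar>schwarzian f1 f2 f3 x - schwarzian f1 f2 f3 y\<bar> \<le> KS * \<bar>x - y\<bar> powr \<beta>"
    using C3_holder_imp_holder_on_schwarzian(2)[OF assms(3,1,2,4)] by (rule holder_onE) blast
  show ?thesis
  proof (intro exI[of _ "KG + 2 * (KS / 6)"] ballI)
    fix t x1 x2 x3 assume t: "t \<in> ?S" and x1: "x1 \<in> ?S" and "x2 \<in> ?S" "x3 \<in> ?S"
    have nonzero: "f1 t \<noteq> 0" "f1 x1 \<noteq> 0"
      using assms(4) t x1 by (metis less_irrefl)+
    have taylor: "\<bar>- (g x1 - g t - g' t * (x1 - t))\<bar> \<le> KG * \<bar>x1 - t\<bar> powr (1 + \<beta>)"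
      unfolding abs_minus_cancel using assms(1) KG t x1
      by (intro holder_derivative_taylor_remainder[OF _ _ _ _ _ g_deriv]) auto
    have "\<bar>(schwarzian f1 f2 f3 t - schwarzian f1 f2 f3 x1) / 6\<bar> \<le> KS / 6 * \<bar>x1 - t\<bar> powr \<beta>"
      using KS(2)[OF t x1] by (simp add: abs_minus_commute)
    with taylor show "\<bar>f2 t / (2 * f1 t) + f3 t / (6 * f1 t) * (x1 + x2 + x3 - 3 * t)
        - (f2 t / (2 * f1 t))^2 * (x2 + x3 - 2 * t)
        - f2 x1 / (2 * f1 x1) - 1/6 * schwarzian f1 f2 f3 x1 * (x2 + x3 - 2 * x1)\<bar>
      \<le> (KG + 2 * (KS / 6)) * (Max {x1, x2, x3, t} - Min {x1, x2, x3, t}) powr (1 + \<beta>)"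
      unfolding schwarzian_expansion_identity[of f1 t x1, OF nonzero]
      using assms(1) KG(1) KS(1) unfolding g_def g'_def by (intro two_term_bound_by_spread) auto
  qed
qed

end
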